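(* Let $f(z)=z+\sum_{k=2}^{\infty}a_kz^k$ be analytic in $\mathbb{D}=\{z:|z|<1\}$ with $zf'(z)-f(z)=\frac12 z^2\phi(z)$ for all $z\in\mathbb{D}$, where $\phi$ is analytic in $\mathbb{D}$ and $|\phi(z)|\le1$. Let $r_{\mathcal S}$ denote the positive root (in $(0,1)$) of \[(1-r)\ln(1-r)+2-3r=0.\] Then for every $n\ge2$ the partial sum $s_n(z;f)=z+\sum_{k=2}^n a_kz^k$ is close-to-convex in the disk $|z|<r_{\mathcal S}$.
   Context: A normalized analytic function $g$ is close-to-convex in a disk if there is a convex function $h$ there with $\mathrm{Re}(g'(z)/h'(z))>0$ in the disk (in particular this holds if $\mathrm{Re}\,g'(z)>0$ there). *)

theory Defs
  imports "HOL-Analysis.Analysis"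
begin

definition convex_fun_in :: "real \<Rightarrow> (complex \<Rightarrow> complex) \<Rightarrow> bool" where
  "convex_fun_in r h \<longleftrightarrow>
     h holomorphic_on ball 0 r \<and> inj_on h (ball 0 r) \<and> convex (h ` ball 0 r)"

definition close_to_convex_in :: "real \<Rightarrow> (complex \<Rightarrow> complex) \<Rightarrow> bool" where
  "close_to_convex_in r g \<longleftrightarrow>
     g holomorphic_on ball 0 r \<and> g 0 = 0 \<and> deriv g 0 = 1 \<and>
     (\<exists>h. convex_fun_in r h \<and> (\<forall>z\<in>ball 0 r. Re (deriv g z / deriv h z) > 0))"

end

theory Submission
  imports Defs "HOL-Complex_Analysis.Complex_Analysis"
begin

(* For f = \<Sum> a_k z^k the function z f'(z) - f(z) = \<Sum> (k - 1) a_k z^k is bounded by |z|^2/2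
   on the unit disk, so Cauchy's estimates on circles of radius tending to 1 give
   (k - 1) |a_k| \<le> 1/2. Hence for |z| < r the partial sum s_n satisfies
   Re s_n'(z) > 1 - \<Sum>_{k \<ge> 2} k r^(k-1) / (2(k - 1)), and this series sums to
   (r/(1 - r) - ln (1 - r))/2, which equals 1 exactly when r = r_S. So Re s_n' > 0 on the
   disk of radius r_S, and s_n is close-to-convex with respect to the identity. *)

lemma close_to_convex_in_if_Re_deriv_pos:
  assumes "g holomorphic_on ball 0 r" "g 0 = 0" "deriv g 0 = 1"
    and "\<And>z. z \<in> ball 0 r \<Longrightarrow> Re (deriv g z) > 0"
  shows "close_to_convex_in r g"
  unfolding close_to_convex_in_def convex_fun_in_def
  using assms by (intro conjI exI[of _ "\<lambda>z. z"]) auto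

lemma has_fps_expansion_if_sums:
  fixes f :: "'a :: {banach, real_normed_div_algebra} \<Rightarrow> 'a"
  assumes "0 < r" and "\<And>z. norm z < r \<Longrightarrow> (\<lambda>k. a k * z ^ k) sums f z"
  shows "f has_fps_expansion Abs_fps a"
proof (rule has_fps_expansionI)
  have "eventually (\<lambda>u. u \<in> ball 0 r) (nhds (0::'a))"
    using assms(1) by (intro eventually_nhds_in_open) auto
  then show "\<forall>\<^sub>F u in nhds 0. (\<lambda>n. Abs_fps a $ n * u ^ n) sums f u"
    by eventually_elim (use assms(2) in auto)
qed

lemma fps_nth_norm_le_if_norm_le_power:
  fixes G :: "complex \<Rightarrow> complex" and F :: "complex fps"
  assumes hol: "G holomorphic_on ball 0 1" and G: "G has_fps_expansion F"
    and bound: "\<And>z. norm z < 1 \<Longrightarrow> norm (G z) \<le> M * norm z ^ m"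
    and "m \<le> k"
  shows "norm (F $ k) \<le> M"
proof -
  have on_circle: "\<rho> ^ (k - m) * norm (F $ k) \<le> M" if "0 < \<rho>" "\<rho> < 1" for \<rho> :: real
  proof -
    have "norm ((deriv ^^ k) G 0) \<le> fact k * (M * \<rho> ^ m) / \<rho> ^ k"
    proof (rule Cauchy_inequality)
      show "G holomorphic_on ball 0 \<rho>"
        using hol that by (auto elim!: holomorphic_on_subset)
      show "continuous_on (cball 0 \<rho>) G"
        using hol that by (intro holomorphic_on_imp_continuous_on) (auto elim!: holomorphic_on_subset)
      show "norm (G z) \<le> M * \<rho> ^ m" if "norm (0 - z) = \<rho>" for z
        using bound[of z] that \<open>\<rho> < 1\<close> by simp
    qed fact
    moreover have "(deriv ^^ k) G 0 = fact k * F $ k"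
      using fps_nth_fps_expansion[OF G, of k] by simp
    ultimately have "norm (F $ k) * \<rho> ^ k \<le> M * \<rho> ^ m"
      using that by (simp add: norm_mult field_simps)
    moreover have "\<rho> ^ k = \<rho> ^ m * \<rho> ^ (k - m)"
      using \<open>m \<le> k\<close> by (simp flip: power_add)
    ultimately show ?thesis
      using that by (simp add: algebra_simps)
  qed
  have "((\<lambda>\<rho>::real. \<rho> ^ (k - m) * norm (F $ k)) \<longlongrightarrow> 1 ^ (k - m) * norm (F $ k)) (at_left 1)"
    by (intro tendsto_intros)
  moreover have "eventually (\<lambda>\<rho>::real. \<rho> ^ (k - m) * norm (F $ k) \<le> M) (at_left 1)"
  proof -
    have "eventually (\<lambda>\<rho>::real. \<rho> \<in> {0<..<1}) (at_left 1)"
      by (rule eventually_at_left_real) simp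
    then show ?thesis
      by eventually_elim (use on_circle in auto)
  qed
  ultimately have "1 ^ (k - m) * norm (F $ k) \<le> M"
    by (rule tendsto_upperbound) (simp add: trivial_limit_at_left_real)
  then show ?thesis by simp
qed

lemma coeff_bound_if_z_deriv_minus_self_bounded:
  fixes f \<phi> :: "complex \<Rightarrow> complex" and a :: "nat \<Rightarrow> complex"
  assumes f_series: "\<And>z. norm z < 1 \<Longrightarrow> (\<lambda>k. a k * z ^ k) sums f z"
    and f_hol: "f holomorphic_on ball 0 1"
    and phi_bound: "\<And>z. norm z < 1 \<Longrightarrow> norm (\<phi> z) \<le> 1"
    and eq: "\<And>z. norm z < 1 \<Longrightarrow> z * deriv f z - f z = 1/2 * z^2 * \<phi> z"
    and "k \<ge> 2"
  shows "norm (a k) \<le> 1 / (2 * real (k - 1))"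
proof -
  define A where "A = Abs_fps a"
  have "f has_fps_expansion A"
    unfolding A_def by (rule has_fps_expansion_if_sums[OF _ f_series]) auto
  then have expansion: "(\<lambda>z. z * deriv f z - f z) has_fps_expansion fps_X * fps_deriv A - A"
    by (intro fps_expansion_intros)
  have "norm ((fps_X * fps_deriv A - A) $ k) \<le> 1/2"
  proof (rule fps_nth_norm_le_if_norm_le_power[OF _ expansion])
    show "(\<lambda>z. z * deriv f z - f z) holomorphic_on ball 0 1"
      using f_hol by (intro holomorphic_intros holomorphic_deriv) auto
    show "norm (z * deriv f z - f z) \<le> 1/2 * norm z ^ 2" if "norm z < 1" for z
    proof -
      have "norm (z * deriv f z - f z) = 1/2 * norm z ^ 2 * norm (\<phi> z)"
        unfolding eq[OF that] by (simp add: norm_mult norm_power)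
      also have "\<dots> \<le> 1/2 * norm z ^ 2"
        using phi_bound[OF that] by (simp add: mult_left_le)
      finally show ?thesis .
    qed
  qed (use \<open>k \<ge> 2\<close> in auto)
  moreover have "(fps_X * fps_deriv A - A) $ k = of_nat (k - 1) * a k"
    using \<open>k \<ge> 2\<close> by (cases k) (auto simp: A_def algebra_simps)
  ultimately have "real (k - 1) * norm (a k) \<le> 1/2"
    by (simp add: norm_mult)
  then show ?thesis
    using \<open>k \<ge> 2\<close> by (simp add: field_simps)
qed

lemma sums_coeff_weights:
  fixes r :: real
  assumes "0 \<le> r" "r < 1"
  shows "(\<lambda>j. real (j + 2) / (2 * real (j + 1)) * r ^ (j + 1))
           sums ((r / (1 - r) - ln (1 - r)) / 2)"
proof -
  have "(\<lambda>j. - ((- (- r)) ^ j) / of_nat j) sums ln (1 + (- r))"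
    by (rule ln_series') (use assms in auto)
  then have "(\<lambda>j. r ^ j / of_nat j) sums (- ln (1 - r))"
    using sums_minus by fastforce
  then have log: "(\<lambda>j. r ^ (j + 1) / of_nat (j + 1)) sums (- ln (1 - r))"
    using sums_Suc_iff[of "\<lambda>j. r ^ j / of_nat j" "- ln (1 - r)"] by simp
  have geom: "(\<lambda>j. r ^ (j + 1)) sums (r / (1 - r))"
    using sums_mult[OF geometric_sums[of r], of r] assms by (simp add: field_simps)
  have "(\<lambda>j. (r ^ (j + 1) + r ^ (j + 1) / of_nat (j + 1)) / 2) sums ((r / (1 - r) - ln (1 - r)) / 2)"
    using sums_divide[OF sums_add[OF geom log], of 2] by simp
  moreover have "(\<lambda>j. real (j + 2) / (2 * real (j + 1)) * r ^ (j + 1))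
                   = (\<lambda>j. (r ^ (j + 1) + r ^ (j + 1) / of_nat (j + 1)) / 2)"
    by (rule ext) (simp add: field_simps)
  ultimately show ?thesis
    by simp
qed

lemma sum_coeff_weights_lt_one:
  fixes r t :: real
  assumes "r < 1" and root: "(1 - r) * ln (1 - r) + 2 - 3 * r = 0"
    and "0 \<le> t" "t < r" and "n \<ge> 2"
  shows "(\<Sum>k=2..n. real k / (2 * real (k - 1)) * t ^ (k - 1)) < 1"
proof -
  define w where "w k = real k / (2 * real (k - 1)) * r ^ (k - 1)" for k
  have "(r / (1 - r) - ln (1 - r)) / 2 = 1"
  proof -
    have "ln (1 - r) = (3 * r - 2) / (1 - r)"
      using root assms by (simp add: field_simps)
    then show ?thesis
      using assms by (simp add: field_simps)
  qed
  moreover have "(\<lambda>j. w (j + 2)) = (\<lambda>j. real (j + 2) / (2 * real (j + 1)) * r ^ (j + 1))"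
    by (simp add: w_def)
  ultimately have sums: "(\<lambda>j. w (j + 2)) sums 1"
    using sums_coeff_weights[of r] assms by simp
  have "(\<Sum>k=2..n. real k / (2 * real (k - 1)) * t ^ (k - 1)) < sum w {2..n}"
    unfolding w_def
  proof (rule sum_strict_mono_ex1)
    show "\<forall>k\<in>{2..n}. real k / (2 * real (k - 1)) * t ^ (k - 1)
                       \<le> real k / (2 * real (k - 1)) * r ^ (k - 1)"
      using assms by (intro ballI mult_left_mono power_mono) auto
    show "\<exists>k\<in>{2..n}. real k / (2 * real (k - 1)) * t ^ (k - 1)
                       < real k / (2 * real (k - 1)) * r ^ (k - 1)"
      using assms by (intro bexI[of _ 2]) auto
  qed simp
  also have "\<dots> = (\<Sum>j=0..n-2. w (j + 2))"
    using sum.shift_bounds_cl_nat_ivl[of w 0 2 "n - 2"] \<open>n \<ge> 2\<close>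
    by (simp only: add_0 le_add_diff_inverse2)
  also have "\<dots> \<le> (\<Sum>j. w (j + 2))"
    using sums assms by (intro sum_le_suminf) (auto simp: sums_iff w_def)
  also have "\<dots> = 1"
    using sums by (simp add: sums_iff)
  finally show ?thesis .
qed

lemma deriv_partial_sum:
  fixes a :: "nat \<Rightarrow> 'a :: real_normed_field"
  shows "deriv (\<lambda>z. z + (\<Sum>k=2..n. a k * z ^ k)) z = 1 + (\<Sum>k=2..n. of_nat k * a k * z ^ (k - 1))"
  by (rule DERIV_imp_deriv) (auto intro!: derivative_eq_intros sum.cong simp: algebra_simps)

lemma Re_deriv_partial_sum_pos:
  fixes a :: "nat \<Rightarrow> complex"
  assumes "(\<Sum>k=2..n. real k * norm (a k) * norm z ^ (k - 1)) < 1"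
  shows "Re (deriv (\<lambda>z. z + (\<Sum>k=2..n. a k * z ^ k)) z) > 0"
proof -
  let ?S = "\<Sum>k=2..n. of_nat k * a k * z ^ (k - 1)"
  have "- Re ?S \<le> norm ?S"
    using abs_Re_le_cmod by (metis abs_le_D2)
  also have "\<dots> \<le> (\<Sum>k=2..n. norm (of_nat k * a k * z ^ (k - 1)))"
    by (rule norm_sum)
  also have "\<dots> = (\<Sum>k=2..n. real k * norm (a k) * norm z ^ (k - 1))"
    by (simp add: norm_mult norm_power)
  finally show ?thesis
    using assms by (simp add: deriv_partial_sum)
qed

theorem theorem2p3:
  fixes f \<phi> :: "complex \<Rightarrow> complex" and a :: "nat \<Rightarrow> complex" and rS :: real and n :: nat
  assumes a0: "a 0 = 0" and a1: "a 1 = 1"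
    and f_series: "\<And>z. norm z < 1 \<Longrightarrow> (\<lambda>k. a k * z ^ k) sums f z"
    and f_hol: "f holomorphic_on ball 0 1"
    and phi_hol: "\<phi> holomorphic_on ball 0 1"
    and phi_bound: "\<And>z. norm z < 1 \<Longrightarrow> norm (\<phi> z) \<le> 1"
    and eq: "\<And>z. norm z < 1 \<Longrightarrow> z * deriv f z - f z = 1/2 * z^2 * \<phi> z"
    and rS_pos: "0 < rS" and rS_lt1: "rS < 1"
    and rS_root: "(1 - rS) * ln (1 - rS) + 2 - 3 * rS = 0"
    and n: "n \<ge> 2"
  shows "close_to_convex_in rS (\<lambda>z. z + (\<Sum>k=2..n. a k * z ^ k))"
proof (rule close_to_convex_in_if_Re_deriv_pos)
  show "(\<lambda>z. z + (\<Sum>k=2..n. a k * z ^ k)) holomorphic_on ball 0 rS"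
    by (intro holomorphic_intros)
  show "deriv (\<lambda>z. z + (\<Sum>k=2..n. a k * z ^ k)) 0 = 1"
    by (auto simp: deriv_partial_sum intro!: sum.neutral)
  fix z :: complex
  assume "z \<in> ball 0 rS"
  have "(\<Sum>k=2..n. real k * norm (a k) * norm z ^ (k - 1))
          \<le> (\<Sum>k=2..n. real k / (2 * real (k - 1)) * norm z ^ (k - 1))"
  proof (intro sum_mono mult_right_mono)
    fix k assume "k \<in> {2..n}"
    then have "norm (a k) \<le> 1 / (2 * real (k - 1))"
      by (intro coeff_bound_if_z_deriv_minus_self_bounded[OF f_series f_hol phi_bound eq]) auto
    then have "real k * norm (a k) \<le> real k * (1 / (2 * real (k - 1)))"
      by (rule mult_left_mono) simp
    then show "real k * norm (a k) \<le> real k / (2 * real (k - 1))"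
      by simp
  qed simp
  also have "\<dots> < 1"
    using \<open>z \<in> ball 0 rS\<close> by (intro sum_coeff_weights_lt_one[OF rS_lt1 rS_root _ _ n]) auto
  finally show "Re (deriv (\<lambda>z. z + (\<Sum>k=2..n. a k * z ^ k)) z) > 0"
    by (rule Re_deriv_partial_sum_pos)
qed simp

end
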